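(* Let $\bar d=2^S$ with $S\ge1$, let $\bar\phi\in\mathcal S(\bar d)$, let $T\in\mathbb N_+$ and $\bar p_1,\dots,\bar p_T\in\Delta(\bar d)$. Then for every scale $s\in[1:S]$, $$\sum_{l=1}^{2^{S-s}}\Big(\frac{1}{|I^{(s,l)}|}\sum_{j=1}^{\bar d}\big|\langle\bar\phi,h^{(s,l)}\otimes e^{(j)}\rangle\big|\Big)\sqrt{1+\sum_{t=1}^T\sum_{i\in I^{(s,l)}}\bar p_{t,i}}\ \le\ \sqrt{\sum_{i=1}^{\bar d-1}\mathbf 1[\bar\phi_i\neq\bar\phi_{i+1}]}\cdot\sqrt{\bar d+T}.$$
   Context: $\Delta(n)=\{p\ge0,\|p\|_1=1\}$; $\mathcal S(n)$ is the set of $n\times n$ right stochastic matrices; $\bar\phi_i$ is the $i$-th row; $\langle x,y\rangle=\sum_{i,j}x_{i,j}y_{i,j}$; $(u\otimes v)_{i,j}=u_iv_j$; $e^{(j)}$ is the $j$-th standard basis vector; $[a:b]=\{a,\dots,b\}$. For $s\in[1:S]$, $l\in[1:2^{S-s}]$, the Haar vector $h^{(s,l)}\in\mathbb R^{\bar d}$ has entries $1$ on $[2^s(l-1)+1:2^s(l-1)+2^{s-1}]$, $-1$ on $[2^s(l-1)+2^{s-1}+1:2^sl]$, and $0$ elsewhere; its support is $I^{(s,l)}=[2^s(l-1)+1:2^sl]$. *)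

theory Defs
  imports "HOL-Analysis.Analysis"
begin

(* Indices are 1-based: i, j range over {1..d}. *)

definition prob_simplex :: "nat \<Rightarrow> (nat \<Rightarrow> real) set" where
  "prob_simplex n = {p. (\<forall>i\<in>{1..n}. p i \<ge> 0) \<and> (\<Sum>i=1..n. p i) = 1}"

definition right_stochastic :: "nat \<Rightarrow> (nat \<Rightarrow> nat \<Rightarrow> real) set" where
  "right_stochastic n = {phi. \<forall>i\<in>{1..n}. (\<lambda>j. phi i j) \<in> prob_simplex n}"

definition haar :: "nat \<Rightarrow> nat \<Rightarrow> nat \<Rightarrow> real" where
  "haar s l i = (if i \<in> {2^s*(l-1)+1 .. 2^s*(l-1)+2^(s-1)} then 1
                 else if i \<in> {2^s*(l-1)+2^(s-1)+1 .. 2^s*l} then -1 else 0)"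

definition haar_supp :: "nat \<Rightarrow> nat \<Rightarrow> nat set" where
  "haar_supp s l = {2^s*(l-1)+1 .. 2^s*l}"

definition frob :: "nat \<Rightarrow> (nat \<Rightarrow> nat \<Rightarrow> real) \<Rightarrow> (nat \<Rightarrow> nat \<Rightarrow> real) \<Rightarrow> real" where
  "frob n x y = (\<Sum>i=1..n. \<Sum>j=1..n. x i j * y i j)"

definition outer :: "(nat \<Rightarrow> real) \<Rightarrow> (nat \<Rightarrow> real) \<Rightarrow> nat \<Rightarrow> nat \<Rightarrow> real" where
  "outer u v i j = u i * v j"

definition std_basis :: "nat \<Rightarrow> nat \<Rightarrow> real" where
  "std_basis j k = (if k = j then 1 else 0)"

definition rows_differ :: "nat \<Rightarrow> (nat \<Rightarrow> nat \<Rightarrow> real) \<Rightarrow> nat \<Rightarrow> bool" where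
  "rows_differ n phi i = (\<exists>j\<in>{1..n}. phi i j \<noteq> phi (Suc i) j)"

end

theory Submission
  imports Defs
begin

text \<open>
  The coefficient of the Haar vector of a block only sees the rows of \<open>phi\<close> inside that
  block. Since the Haar vector has mean zero, it vanishes when these rows are all equal; since the
  rows are probability vectors, its normalized \<open>\<ell>\<^sub>1\<close>-mass is at most 1. Hence at most as
  many blocks contribute as there are row changes, and Cauchy-Schwarz over the contributing blocks,
  together with the fact that the masses \<open>1 + \<Sum>\<^sub>t p\<^sub>t(I)\<close> of all blocks add up to
  \<open>2\<^sup>S\<^sup>-\<^sup>s + T\<close>, gives the bound.
\<close>

lemma sum_nat_blocks:
  fixes f :: "nat \<Rightarrow> 'a::comm_monoid_add"
  shows "(\<Sum>l=1..m. \<Sum>i\<in>{q*(l-1)+1..q*l}. f i) = (\<Sum>i=1..q*m. f i)"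
proof (induction m)
  case 0 then show ?case by simp
next
  case (Suc m)
  have "(\<Sum>i=1..q*m+q. f i) = (\<Sum>i=1..q*m. f i) + (\<Sum>i=q*m+1..q*m+q. f i)"
    by (rule sum.ub_add_nat) simp
  then show ?case using Suc by (simp add: sum.cl_ivl_Suc add.commute)
qed

lemma card_blocks_meeting_le:
  fixes q m :: nat
  assumes "0 < q"
  shows "card {l\<in>{1..m}. \<exists>i\<in>{q*(l-1)+1..<q*l}. R i} \<le> card {i\<in>{1..q*m-1}. R i}"
proof -
  let ?L = "{l\<in>{1..m}. \<exists>i\<in>{q*(l-1)+1..<q*l}. R i}"
  let ?D = "{i\<in>{1..q*m-1}. R i}"
  have "?L \<subseteq> (\<lambda>i. (i-1) div q + 1) ` ?D"
  proof
    fix l assume "l \<in> ?L"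
    then obtain i where l: "l \<in> {1..m}" and i: "i \<in> {q*(l-1)+1..<q*l}" and "R i"
      by auto
    have ql: "q*l = q*(l-1) + q" using l by (cases l) auto
    have "i < q*l" using i by simp
    also have "q*l \<le> q*m" using l by simp
    finally have "i < q*m" .
    then have "i \<in> ?D" using i \<open>R i\<close> by auto
    moreover have "(i-1) div q = l-1" using i ql by (intro div_nat_eqI) auto
    ultimately show "l \<in> (\<lambda>i. (i-1) div q + 1) ` ?D" using l by force
  qed
  then have "card ?L \<le> card ((\<lambda>i. (i-1) div q + 1) ` ?D)"
    by (intro card_mono) auto
  also have "\<dots> \<le> card ?D"
    by (rule card_image_le) simp
  finally show ?thesis .
qed

lemma sum_mult_sqrt_le_sqrt_card:
  fixes c f :: "'a \<Rightarrow> real"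
  assumes "finite A" "L \<subseteq> A"
    and "\<And>l. l \<in> A \<Longrightarrow> 0 \<le> c l \<and> c l \<le> 1"
    and "\<And>l. l \<in> A - L \<Longrightarrow> c l = 0"
    and "\<And>l. l \<in> A \<Longrightarrow> 0 \<le> f l"
  shows "(\<Sum>l\<in>A. c l * sqrt (f l)) \<le> sqrt (card L) * sqrt (\<Sum>l\<in>A. f l)"
proof -
  have finL: "finite L" using assms(1,2) by (rule finite_subset[rotated])
  have "(\<Sum>l\<in>A. c l * sqrt (f l)) = (\<Sum>l\<in>L. c l * sqrt (f l))"
    using assms(1,2,4) by (intro sum.mono_neutral_right) auto
  also have "\<dots> \<le> (\<Sum>l\<in>L. sqrt (f l))"
    using assms(2,3,5) by (intro sum_mono mult_left_le_one_le) auto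
  also have "\<dots> \<le> sqrt (card L * (\<Sum>l\<in>L. f l))"
  proof (rule real_le_rsqrt)
    have "(\<Sum>l\<in>L. sqrt (f l))\<^sup>2 \<le> (\<Sum>l\<in>L. (sqrt (f l))\<^sup>2) * card L"
      by (rule sum_squared_le_sum_of_squares)
    also have "(\<Sum>l\<in>L. (sqrt (f l))\<^sup>2) = (\<Sum>l\<in>L. f l)"
      using assms(2,5) by (intro sum.cong) auto
    finally show "(\<Sum>l\<in>L. sqrt (f l))\<^sup>2 \<le> card L * (\<Sum>l\<in>L. f l)"
      by (simp add: mult.commute)
  qed
  also have "\<dots> \<le> sqrt (card L * (\<Sum>l\<in>A. f l))"
    using assms(1,2,5) by (intro real_sqrt_le_mono mult_left_mono sum_mono2) auto
  finally show ?thesis by (simp add: real_sqrt_mult)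
qed

lemma rows_eq_if_not_rows_differ:
  assumes "\<forall>k\<in>{a..<b}. \<not> rows_differ n phi k" "i \<in> {a..b}" "j \<in> {1..n}"
  shows "phi i j = phi a j"
proof -
  have "a \<le> i" "i \<le> b" using assms(2) by auto
  then show ?thesis
  proof (induction i rule: dec_induct)
    case (step k)
    then have "phi (Suc k) j = phi k j"
      using assms(1,3) unfolding rows_differ_def by auto
    with step show ?case by simp
  qed simp
qed

lemma haar_supp_subset:
  assumes "s \<le> S" "l \<in> {1..2^(S-s)}"
  shows "haar_supp s l \<subseteq> {1..2^S}"
proof -
  have "(2::nat)^s * l \<le> 2^s * 2^(S-s)" using assms(2) by simp
  also have "\<dots> = 2^S" using assms(1) by (simp flip: power_add)
  finally show ?thesis unfolding haar_supp_def by auto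
qed

lemma haar_eq_0_outside_supp:
  assumes "1 \<le> l" "i \<notin> haar_supp s l"
  shows "haar s l i = 0"
proof -
  have "(2::nat)^s*(l-1) + 2^(s-1) \<le> 2^s * l"
    using assms(1) by (cases l; cases s) auto
  then show ?thesis using assms(2) unfolding haar_def haar_supp_def by auto
qed

lemma abs_haar_in_supp: "i \<in> haar_supp s l \<Longrightarrow> \<bar>haar s l i\<bar> = 1"
  unfolding haar_def haar_supp_def by auto

lemma sum_haar_supp:
  assumes "1 \<le> s" "1 \<le> l"
  shows "(\<Sum>i\<in>haar_supp s l. haar s l i) = 0"
proof -
  define a where "a = (2::nat)^s*(l-1)"
  define r where "r = (2::nat)^(s-1)"
  have half: "(2::nat)^s = r + r" using assms(1) unfolding r_def
    by (metis Suc_diff_le diff_Suc_1 mult_2 power_Suc)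
  have end_eq: "(2::nat)^s * l = a + r + r" using assms(2) half unfolding a_def
    by (cases l) auto
  have "(\<Sum>i\<in>haar_supp s l. haar s l i)
      = (\<Sum>i=a+1..a+r. haar s l i) + (\<Sum>i=a+r+1..a+r+r. haar s l i)"
    unfolding haar_supp_def a_def[symmetric] end_eq by (rule sum.ub_add_nat) simp
  also have "(\<Sum>i=a+1..a+r. haar s l i) = (\<Sum>i=a+1..a+r. 1)"
    by (rule sum.cong) (auto simp: haar_def a_def r_def)
  also have "(\<Sum>i=a+r+1..a+r+r. haar s l i) = (\<Sum>i=a+r+1..a+r+r. -1)"
    by (rule sum.cong) (use end_eq in \<open>auto simp: haar_def a_def r_def\<close>)
  finally show ?thesis by simp
qed

lemma frob_outer_std_basis:
  assumes "j \<in> {1..n}"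
  shows "frob n phi (outer h (std_basis j)) = (\<Sum>i=1..n. h i * phi i j)"
proof -
  have "(\<Sum>k=1..n. phi i k * (h i * std_basis j k)) = h i * phi i j" for i
    using assms by (simp add: std_basis_def mult.commute if_distrib sum.delta' cong: if_cong)
  then show ?thesis unfolding frob_def outer_def by simp
qed

lemma frob_outer_haar:
  assumes "1 \<le> l" "haar_supp s l \<subseteq> {1..n}" "j \<in> {1..n}"
  shows "frob n phi (outer (haar s l) (std_basis j)) = (\<Sum>i\<in>haar_supp s l. haar s l i * phi i j)"
proof -
  have "haar s l i * phi i j = 0" if "i \<in> {1..n} - haar_supp s l" for i
    using that by (simp add: haar_eq_0_outside_supp[OF assms(1)])
  then show ?thesis
    unfolding frob_outer_std_basis[OF assms(3)]
    by (intro sum.mono_neutral_right[OF finite_atLeastAtMost assms(2)]) blast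
qed

lemma sum_abs_frob_outer_haar_le_card:
  assumes "phi \<in> right_stochastic n" "1 \<le> l" "haar_supp s l \<subseteq> {1..n}"
  shows "(\<Sum>j=1..n. \<bar>frob n phi (outer (haar s l) (std_basis j))\<bar>) \<le> card (haar_supp s l)"
proof -
  have row: "(\<forall>j\<in>{1..n}. 0 \<le> phi i j) \<and> (\<Sum>j=1..n. phi i j) = 1" if "i \<in> haar_supp s l" for i
    using assms(1) that assms(3) unfolding right_stochastic_def prob_simplex_def by blast
  have "(\<Sum>j=1..n. \<bar>frob n phi (outer (haar s l) (std_basis j))\<bar>)
      = (\<Sum>j=1..n. \<bar>\<Sum>i\<in>haar_supp s l. haar s l i * phi i j\<bar>)"
    by (intro sum.cong refl) (simp only: frob_outer_haar[OF assms(2,3)])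
  also have "\<dots> \<le> (\<Sum>j=1..n. \<Sum>i\<in>haar_supp s l. phi i j)"
  proof (intro sum_mono order.trans[OF sum_abs] order.refl)
    fix j i assume "j \<in> {1..n}" "i \<in> haar_supp s l"
    then show "\<bar>haar s l i * phi i j\<bar> \<le> phi i j"
      using row abs_haar_in_supp by (simp add: abs_mult)
  qed
  also have "\<dots> = (\<Sum>i\<in>haar_supp s l. \<Sum>j=1..n. phi i j)"
    by (rule sum.swap)
  also have "\<dots> = card (haar_supp s l)"
    using row by simp
  finally show ?thesis .
qed

lemma frob_outer_haar_eq_0:
  assumes "1 \<le> s" "1 \<le> l" "haar_supp s l \<subseteq> {1..n}" "j \<in> {1..n}"
    and "\<forall>i\<in>{2^s*(l-1)+1..<2^s*l}. \<not> rows_differ n phi i"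
  shows "frob n phi (outer (haar s l) (std_basis j)) = 0"
proof -
  let ?a = "2^s*(l-1)+1"
  have const: "phi i j = phi ?a j" if "i \<in> haar_supp s l" for i
    using rows_eq_if_not_rows_differ[OF assms(5) _ assms(4)] that unfolding haar_supp_def by blast
  have "frob n phi (outer (haar s l) (std_basis j)) = (\<Sum>i\<in>haar_supp s l. haar s l i * phi i j)"
    by (rule frob_outer_haar[OF assms(2-4)])
  also have "\<dots> = (\<Sum>i\<in>haar_supp s l. haar s l i) * phi ?a j"
    unfolding sum_distrib_right using const by (intro sum.cong refl) simp
  also have "\<dots> = 0"
    by (simp only: sum_haar_supp[OF assms(1,2)] mult_zero_left)
  finally show ?thesis .
qed

definition haar_weight :: "nat \<Rightarrow> (nat \<Rightarrow> nat \<Rightarrow> real) \<Rightarrow> nat \<Rightarrow> nat \<Rightarrow> real" where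
  "haar_weight n phi s l = 1 / real (card (haar_supp s l)) *
     (\<Sum>j=1..n. \<bar>frob n phi (outer (haar s l) (std_basis j))\<bar>)"

lemma haar_weight_bounds:
  assumes "phi \<in> right_stochastic n" "1 \<le> l" "haar_supp s l \<subseteq> {1..n}"
  shows "0 \<le> haar_weight n phi s l \<and> haar_weight n phi s l \<le> 1"
  using sum_abs_frob_outer_haar_le_card[OF assms]
  by (auto simp: haar_weight_def divide_le_eq_1 sum_nonneg)

lemma haar_weight_eq_0:
  assumes "1 \<le> s" "1 \<le> l" "haar_supp s l \<subseteq> {1..n}"
    and "\<forall>i\<in>{2^s*(l-1)+1..<2^s*l}. \<not> rows_differ n phi i"
  shows "haar_weight n phi s l = 0"
proof -
  have "(\<Sum>j=1..n. \<bar>frob n phi (outer (haar s l) (std_basis j))\<bar>) = 0"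
    using frob_outer_haar_eq_0[OF assms(1-3) _ assms(4)] by (intro sum.neutral) simp
  then show ?thesis unfolding haar_weight_def by simp
qed

lemma sum_haar_supp_mass:
  fixes T s m :: nat
  assumes "\<forall>t\<in>{1..T}. p t \<in> prob_simplex (2^s * m)"
  shows "(\<Sum>l=1..m. \<Sum>t=1..T. \<Sum>i\<in>haar_supp s l. p t i) = T"
proof -
  have "(\<Sum>l=1..m. \<Sum>t=1..T. \<Sum>i\<in>haar_supp s l. p t i)
      = (\<Sum>t=1..T. \<Sum>i=1..2^s*m. p t i)"
    unfolding haar_supp_def by (subst sum.swap) (intro sum.cong refl sum_nat_blocks)
  also have "\<dots> = (\<Sum>t=1..T. 1)"
    using assms unfolding prob_simplex_def by (intro sum.cong) auto
  finally show ?thesis by simp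
qed

theorem mainTheorem6:
  fixes S T :: nat and phi :: "nat \<Rightarrow> nat \<Rightarrow> real" and p :: "nat \<Rightarrow> nat \<Rightarrow> real"
    and s :: nat
  assumes "S \<ge> 1"
    and "phi \<in> right_stochastic (2^S)"
    and "T \<ge> 1"
    and "\<forall>t\<in>{1..T}. p t \<in> prob_simplex (2^S)"
    and "s \<in> {1..S}"
  shows "(\<Sum>l=1..2^(S-s).
            (1 / real (card (haar_supp s l)) *
              (\<Sum>j=1..2^S. \<bar>frob (2^S) phi (outer (haar s l) (std_basis j))\<bar>))
            * sqrt (1 + (\<Sum>t=1..T. \<Sum>i\<in>haar_supp s l. p t i)))
         \<le> sqrt (real (card {i\<in>{1..2^S-1}. rows_differ (2^S) phi i}))
            * sqrt (real (2^S) + real T)"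
proof -
  have s: "1 \<le> s" "s \<le> S" using assms(5) by auto
  define m where "m = (2::nat)^(S-s)"
  have dim: "(2::nat)^S = 2^s * m" unfolding m_def using s(2) by (simp flip: power_add)
  define L where "L = {l\<in>{1..m}. \<exists>i\<in>{2^s*(l-1)+1..<2^s*l}. rows_differ (2^S) phi i}"
  define f where "f l = 1 + (\<Sum>t=1..T. \<Sum>i\<in>haar_supp s l. p t i)" for l
  have supp: "haar_supp s l \<subseteq> {1..2^S}" if "l \<in> {1..m}" for l
    using haar_supp_subset[OF s(2)] that unfolding m_def by blast
  have p_nonneg: "0 \<le> p t i" if "t \<in> {1..T}" "i \<in> {1..2^S}" for t i
    using assms(4) that unfolding prob_simplex_def by auto
  have f_nonneg: "0 \<le> f l" if "l \<in> {1..m}" for l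
    using p_nonneg supp[OF that] unfolding f_def by (intro add_nonneg_nonneg sum_nonneg) auto
  have "(\<Sum>l=1..m. haar_weight (2^S) phi s l * sqrt (f l)) \<le> sqrt (card L) * sqrt (\<Sum>l=1..m. f l)"
    using haar_weight_bounds[OF assms(2) _ supp] haar_weight_eq_0[OF s(1) _ supp] f_nonneg
    by (intro sum_mult_sqrt_le_sqrt_card) (auto simp: L_def)
  also have "\<dots> \<le> sqrt (card {i\<in>{1..2^S-1}. rows_differ (2^S) phi i}) * sqrt (real (2^S) + real T)"
  proof (intro mult_mono real_sqrt_le_mono)
    show "real (card L) \<le> card {i\<in>{1..2^S-1}. rows_differ (2^S) phi i}"
      using card_blocks_meeting_le[of "2^s" m] unfolding L_def dim by simp
    have "(\<Sum>l=1..m. f l) = real m + real T"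
      using sum_haar_supp_mass[of T p s m] assms(4) unfolding f_def dim
      by (simp add: sum.distrib)
    moreover have "m \<le> 2^S"
      unfolding dim by simp
    ultimately show "(\<Sum>l=1..m. f l) \<le> real (2^S) + real T"
      by (simp only: add_le_cancel_right of_nat_le_iff)
  qed (use f_nonneg in \<open>auto intro!: sum_nonneg\<close>)
  finally show ?thesis by (simp only: haar_weight_def f_def m_def)
qed

end
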